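(* Let $X\in\mathbb R^{m\times N_0}$ be fixed and let $W^{(i)}\in\mathbb R^{N_{i-1}\times N_i}$, $i=1,\dots,L$, be independent matrices with i.i.d. $\mathcal N(0,1)$ entries, with all $N_k\ge 3$. Let $X^{(0)}=X$, $X^{(i)}=\rho(X^{(i-1)}W^{(i)})$ with $\rho(x)=\max\{0,x\}$ entrywise. (a) For $p\in\mathbb N$, $p\ge2$, and $1\le i\le L$, with probability at least $1-\sum_{k=1}^i 2N_k/N_{k-1}^p$, $$\max_{1\le j\le N_i}\|X^{(i)}_j\|_2\le(4p)^{i/2}\Bigl(\prod_{k=1}^{i-1}N_k\Bigr)^{1/2}\Bigl(\prod_{k=0}^{i-1}\log N_k\Bigr)^{1/2}\|X\|_F.$$ (b) For $1\le i\le L$, $\displaystyle \mathbb E\|X^{(i)}\|_F^2\ge\frac{\|X\|_F^2}{(2\pi)^i}\prod_{k=1}^i N_k$, where the expectation is over the weights.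
   Context: $X^{(i)}_j$ denotes the $j$-th column of $X^{(i)}$. *)

theory Defs
  imports "HOL-Probability.Probability"
begin

text \<open>Matrices are functions nat => nat => real, entry (r,c); sizes are carried explicitly.
  The weights of all layers are one point w of the index set below: w (i,a,b) is entry (a,b)
  of W^(i), with a < N (i-1), b < N i.\<close>

definition relu :: "real \<Rightarrow> real" where
  "relu x = max 0 x"

definition weight_index :: "nat \<Rightarrow> (nat \<Rightarrow> nat) \<Rightarrow> (nat \<times> nat \<times> nat) set" where
  "weight_index L N = {(i, a, b). 1 \<le> i \<and> i \<le> L \<and> a < N (i - 1) \<and> b < N i}"

definition weight_space :: "nat \<Rightarrow> (nat \<Rightarrow> nat) \<Rightarrow> ((nat \<times> nat \<times> nat) \<Rightarrow> real) measure" where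
  "weight_space L N = PiM (weight_index L N) (\<lambda>_. density lborel std_normal_density)"

fun layer :: "(nat \<Rightarrow> nat) \<Rightarrow> (nat \<Rightarrow> nat \<Rightarrow> real) \<Rightarrow> ((nat \<times> nat \<times> nat) \<Rightarrow> real)
    \<Rightarrow> nat \<Rightarrow> nat \<Rightarrow> nat \<Rightarrow> real" where
  "layer N X w 0 = X"
| "layer N X w (Suc i) = (\<lambda>r c. relu (\<Sum>k<N i. layer N X w i r k * w (Suc i, k, c)))"

definition frob_norm :: "nat \<Rightarrow> nat \<Rightarrow> (nat \<Rightarrow> nat \<Rightarrow> real) \<Rightarrow> real" where
  "frob_norm m n A = sqrt (\<Sum>r<m. \<Sum>c<n. (A r c)\<^sup>2)"

definition col_norm :: "nat \<Rightarrow> (nat \<Rightarrow> nat \<Rightarrow> real) \<Rightarrow> nat \<Rightarrow> real" where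
  "col_norm m A j = sqrt (\<Sum>r<m. (A r j)\<^sup>2)"

end

theory Submission
  imports Defs
begin

text \<open>
  Conditionally on layer \<open>i - 1\<close>, the entries of a column of \<open>X\<^bsub>i-1\<^esub> W\<^bsub>i\<^esub>\<close> are
  independent centred Gaussians whose variances are the squared row norms of layer \<open>i - 1\<close>.

  For (b): a centred Gaussian \<open>Z\<close> of variance \<open>s\<close> has \<open>E relu(Z)^2 = s/2\<close>, so integrating out
  one weight block at a time gives exactly \<open>E \<parallel>X\<^bsub>i\<^esub>\<parallel>_F^2 = \<parallel>X\<parallel>_F^2 N\<^bsub>1\<^esub>\<cdots>N\<^bsub>i\<^esub> / 2^i\<close>.

  For (a): since \<open>E exp(Z^2/(4s)) = sqrt 2\<close>, Jensen's inequality for \<open>exp\<close> turns into a Chernoff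
  bound: a given column of layer \<open>i\<close> has squared norm above \<open>t \<parallel>X\<^bsub>i-1\<^esub>\<parallel>_F^2\<close> with probability
  at most \<open>sqrt 2 exp(-t/4)\<close>. With \<open>t = 4 p log N\<^bsub>i-1\<^esub>\<close> and a union bound over columns and
  layers, outside an event of probability at most \<open>\<Sum>k. sqrt 2 N\<^bsub>k\<^esub> / N\<^bsub>k-1\<^esub>^p\<close> every column
  is controlled by the Frobenius norm of the previous layer, and iterating this gives the bound.
\<close>

section \<open>Independent standard Gaussian weights\<close>

abbreviation std_gaussian :: "real measure" where
  "std_gaussian \<equiv> density lborel std_normal_density"

lemma prob_space_std_gaussian: "prob_space std_gaussian"
  by (rule prob_space_normal_density) simp

lemma prob_space_PiM_std_gaussian: "prob_space (PiM J (\<lambda>_. std_gaussian))"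
  by (intro prob_space_PiM prob_space_std_gaussian)

lemma product_sigma_finite_std_gaussian: "product_sigma_finite (\<lambda>_::'i. std_gaussian)"
proof -
  have "product_prob_space (\<lambda>_::'i. std_gaussian)"
    by (rule product_prob_spaceI) (rule prob_space_std_gaussian)
  then show ?thesis by (simp add: product_prob_space_def)
qed

lemma measurable_std_gaussian_coordinate:
  "t \<in> J \<Longrightarrow> (\<lambda>w. w t) \<in> borel_measurable (PiM J (\<lambda>_. std_gaussian))"
  using measurable_component_singleton[of t J "\<lambda>_. std_gaussian"]
  by (simp cong: measurable_cong_sets)

lemma distributed_std_gaussian_coordinate:
  assumes "t \<in> J"
  shows "distributed (PiM J (\<lambda>_. std_gaussian)) lborel (\<lambda>w. w t) std_normal_density"
proof -
  have "distr (PiM J (\<lambda>_. std_gaussian)) lborel (\<lambda>w. w t)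
      = distr (PiM J (\<lambda>_. std_gaussian)) std_gaussian (\<lambda>w. w t)"
    by (rule distr_cong) auto
  also have "\<dots> = std_gaussian"
    by (rule distr_PiM_component) (auto intro: prob_space_std_gaussian assms)
  finally show ?thesis
    using measurable_std_gaussian_coordinate[OF assms] unfolding distributed_def by auto
qed

lemma indep_std_gaussian_coordinates:
  assumes "finite J" "J \<noteq> {}"
  shows "prob_space.indep_vars (PiM J (\<lambda>_. std_gaussian)) (\<lambda>_. borel) (\<lambda>t w. w t) J"
proof -
  interpret P: prob_space "PiM J (\<lambda>_. std_gaussian)" by (rule prob_space_PiM_std_gaussian)
  have marginals: "(\<Pi>\<^sub>M t\<in>J. distr (PiM J (\<lambda>_. std_gaussian)) borel (\<lambda>w. w t)) = PiM J (\<lambda>_. std_gaussian)"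
  proof (rule PiM_cong)
    fix t assume "t \<in> J"
    have "distr (PiM J (\<lambda>_. std_gaussian)) borel (\<lambda>w. w t)
        = distr (PiM J (\<lambda>_. std_gaussian)) std_gaussian (\<lambda>w. w t)"
      by (rule distr_cong) auto
    also have "\<dots> = std_gaussian"
      by (rule distr_PiM_component) (auto intro: prob_space_std_gaussian \<open>t \<in> J\<close>)
    finally show "distr (PiM J (\<lambda>_. std_gaussian)) borel (\<lambda>w. w t) = std_gaussian" .
  qed simp
  have joint: "distr (PiM J (\<lambda>_. std_gaussian)) (\<Pi>\<^sub>M t\<in>J. borel) (\<lambda>w. \<lambda>t\<in>J. w t)
      = PiM J (\<lambda>_. std_gaussian)"
  proof -
    have "distr (PiM J (\<lambda>_. std_gaussian)) (\<Pi>\<^sub>M t\<in>J. borel) (\<lambda>w. \<lambda>t\<in>J. w t)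
        = distr (PiM J (\<lambda>_. std_gaussian)) (PiM J (\<lambda>_. std_gaussian)) (\<lambda>w. w)"
      by (rule distr_cong) (auto intro!: sets_PiM_cong simp: space_PiM PiE_def extensional_restrict)
    then show ?thesis by (simp add: distr_id)
  qed
  show ?thesis
    using P.indep_vars_iff_distr_eq_PiM'[where I=J and M'="\<lambda>_. borel" and X="\<lambda>t w. w t"]
      assms marginals joint measurable_std_gaussian_coordinate by simp
qed

lemma distributed_std_gaussian_linear_form:
  assumes J: "finite J" and KJ: "K \<subseteq> J" and pos: "0 < (\<Sum>t\<in>K. (a t)\<^sup>2)"
  shows "distributed (PiM J (\<lambda>_. std_gaussian)) lborel (\<lambda>w. \<Sum>t\<in>K. a t * w t)
           (normal_density 0 (sqrt (\<Sum>t\<in>K. (a t)\<^sup>2)))"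
proof -
  interpret P: prob_space "PiM J (\<lambda>_. std_gaussian)" by (rule prob_space_PiM_std_gaussian)
  define K' where "K' = {t\<in>K. a t \<noteq> 0}"
  have finK: "finite K" using J KJ finite_subset by auto
  have sq: "(\<Sum>t\<in>K. (a t)\<^sup>2) = (\<Sum>t\<in>K'. (a t)\<^sup>2)"
    by (rule sum.mono_neutral_right) (auto simp: K'_def finK)
  have lin: "(\<lambda>w. \<Sum>t\<in>K. a t * w t) = (\<lambda>w. \<Sum>t\<in>K'. a t * w t)"
    by (rule ext, rule sum.mono_neutral_right) (auto simp: K'_def finK)
  have ne: "K' \<noteq> {}" using pos sq by auto
  have K'J: "K' \<subseteq> J" using KJ by (auto simp: K'_def)
  have "P.indep_vars (\<lambda>_. borel) (\<lambda>t w. w t) K'"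
    using P.indep_vars_subset[OF indep_std_gaussian_coordinates[OF J] K'J] ne K'J by auto
  then have indep: "P.indep_vars (\<lambda>_. borel) (\<lambda>t w. a t * w t) K'"
    using P.indep_vars_compose2[of _ _ K' "\<lambda>t x. a t * x" "\<lambda>_. borel"] by simp
  have scaled: "distributed (PiM J (\<lambda>_. std_gaussian)) lborel (\<lambda>w. a t * w t) (normal_density 0 \<bar>a t\<bar>)"
    if "t \<in> K'" for t
    using P.normal_density_affine[OF distributed_std_gaussian_coordinate[of t J], of "a t" 0] that K'J
    by (auto simp: K'_def)
  from P.sum_indep_normal[OF _ ne indep _ scaled] finK
  show ?thesis by (auto simp: sq lin K'_def)
qed

section \<open>Rectified Gaussian pre-activations\<close>

lemma relu_sq_le: "(relu x)\<^sup>2 \<le> x\<^sup>2"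
  by (simp add: relu_def max_def)

lemma relu_sq_add_relu_uminus_sq: "(relu x)\<^sup>2 + (relu (- x))\<^sup>2 = x\<^sup>2"
  by (simp add: relu_def max_def power2_eq_square)

lemma borel_measurable_relu [measurable]: "relu \<in> borel_measurable borel"
  unfolding relu_def[abs_def] by measurable

lemma nn_integral_normal_density_relu_sq:
  assumes "0 < \<sigma>"
  shows "(\<integral>\<^sup>+x. ennreal (normal_density 0 \<sigma> x) * ennreal ((relu x)\<^sup>2) \<partial>lborel) = ennreal (\<sigma>\<^sup>2 / 2)"
proof -
  define A where "A = (\<integral>\<^sup>+x. ennreal (normal_density 0 \<sigma> x * (relu x)\<^sup>2) \<partial>lborel)"
  have reflected: "A = (\<integral>\<^sup>+x. ennreal (normal_density 0 \<sigma> x * (relu (- x))\<^sup>2) \<partial>lborel)"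
    unfolding A_def
    by (subst nn_integral_real_affine[where c="-1" and t=0]) (auto simp: normal_density_def)
  have "A + A = (\<integral>\<^sup>+x. ennreal (normal_density 0 \<sigma> x * (relu x)\<^sup>2)
                      + ennreal (normal_density 0 \<sigma> x * (relu (- x))\<^sup>2) \<partial>lborel)"
    by (subst nn_integral_add) (auto simp: A_def reflected[symmetric])
  also have "\<dots> = (\<integral>\<^sup>+x. ennreal (normal_density 0 \<sigma> x * x\<^sup>2) \<partial>lborel)"
    by (rule nn_integral_cong)
       (simp add: ennreal_plus[symmetric] distrib_left[symmetric] relu_sq_add_relu_uminus_sq del: ennreal_plus)
  also have "\<dots> = ennreal (\<sigma>\<^sup>2)"
    using normal_moment_even[where k=1 and \<mu>=0 and \<sigma>=\<sigma>] assms
    by (subst nn_integral_eq_integral) (auto simp: has_bochner_integral_iff)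
  finally have "A + A = ennreal (\<sigma>\<^sup>2)" .
  then have "A = ennreal (\<sigma>\<^sup>2 / 2)"
    by (cases A) (auto simp: ennreal_plus[symmetric] simp del: ennreal_plus)
  then show ?thesis unfolding A_def by (simp add: ennreal_mult'[symmetric])
qed

text \<open>The integrand is \<open>sqrt 2\<close> times the normal density of standard deviation \<open>sqrt 2 * \<sigma>\<close>.\<close>
lemma nn_integral_normal_density_exp_sq:
  assumes "0 < \<sigma>"
  shows "(\<integral>\<^sup>+x. ennreal (normal_density 0 \<sigma> x) * ennreal (exp (x\<^sup>2 / (4 * \<sigma>\<^sup>2))) \<partial>lborel)
       = ennreal (sqrt 2)"
proof -
  have density: "normal_density 0 \<sigma> x * exp (x\<^sup>2 / (4 * \<sigma>\<^sup>2)) = sqrt 2 * normal_density 0 (sqrt 2 * \<sigma>) x"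
    for x
  proof -
    have "- x\<^sup>2 / (2 * \<sigma>\<^sup>2) + x\<^sup>2 / (4 * \<sigma>\<^sup>2) = - x\<^sup>2 / (2 * (sqrt 2 * \<sigma>)\<^sup>2)"
      using assms by (simp add: power_mult_distrib field_simps)
    then have "exp (- x\<^sup>2 / (2 * \<sigma>\<^sup>2)) * exp (x\<^sup>2 / (4 * \<sigma>\<^sup>2)) = exp (- x\<^sup>2 / (2 * (sqrt 2 * \<sigma>)\<^sup>2))"
      by (simp add: mult_exp_exp)
    moreover have "1 / sqrt (2 * pi * \<sigma>\<^sup>2) = sqrt 2 * (1 / sqrt (2 * pi * (sqrt 2 * \<sigma>)\<^sup>2))"
      using assms by (simp add: power_mult_distrib real_sqrt_mult field_simps)
    ultimately show ?thesis unfolding normal_density_def by (simp add: mult_ac)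
  qed
  have "(\<integral>\<^sup>+x. ennreal (normal_density 0 \<sigma> x) * ennreal (exp (x\<^sup>2 / (4 * \<sigma>\<^sup>2))) \<partial>lborel)
      = (\<integral>\<^sup>+x. ennreal (sqrt 2) * ennreal (normal_density 0 (sqrt 2 * \<sigma>) x) \<partial>lborel)"
    by (rule nn_integral_cong) (simp add: ennreal_mult'[symmetric] density)
  also have "\<dots> = ennreal (sqrt 2)"
    using assms by (subst nn_integral_cmult) (auto simp: nn_integral_eq_integral)
  finally show ?thesis .
qed

definition preact :: "(nat \<Rightarrow> nat \<Rightarrow> real) \<Rightarrow> nat \<Rightarrow> nat \<Rightarrow> nat \<Rightarrow> nat \<Rightarrow> (nat \<times> nat \<times> nat \<Rightarrow> real) \<Rightarrow> real"
  where "preact Y n l r c w = (\<Sum>k<n. Y r k * w (l, k, c))"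

definition row_norm_sq :: "(nat \<Rightarrow> nat \<Rightarrow> real) \<Rightarrow> nat \<Rightarrow> nat \<Rightarrow> real" where
  "row_norm_sq Y n r = (\<Sum>k<n. (Y r k)\<^sup>2)"

lemma row_norm_sq_nonneg [simp]: "0 \<le> row_norm_sq Y n r"
  by (simp add: row_norm_sq_def sum_nonneg)

lemma preact_zero_row: "row_norm_sq Y n r = 0 \<Longrightarrow> preact Y n l r c w = 0"
  unfolding row_norm_sq_def preact_def by (subst (asm) sum_nonneg_eq_0_iff) auto

lemma measurable_preact:
  assumes "\<And>k. k < n \<Longrightarrow> (l, k, c) \<in> J"
  shows "preact Y n l r c \<in> borel_measurable (PiM J (\<lambda>_. std_gaussian))"
  unfolding preact_def[abs_def]
  by (intro borel_measurable_sum borel_measurable_times borel_measurable_const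
        measurable_std_gaussian_coordinate assms) auto

lemma distributed_preact:
  assumes J: "finite J" and sub: "\<And>k. k < n \<Longrightarrow> (l, k, c) \<in> J" and pos: "0 < row_norm_sq Y n r"
  shows "distributed (PiM J (\<lambda>_. std_gaussian)) lborel (preact Y n l r c)
           (normal_density 0 (sqrt (row_norm_sq Y n r)))"
proof -
  define K where "K = (\<lambda>k. (l, k, c)) ` {..<n}"
  define a where "a = (\<lambda>t::nat \<times> nat \<times> nat. Y r (fst (snd t)))"
  have inj: "inj_on (\<lambda>k. (l, k, c)) {..<n}" by (auto simp: inj_on_def)
  have "(\<Sum>t\<in>K. (a t)\<^sup>2) = row_norm_sq Y n r"
    unfolding K_def row_norm_sq_def by (subst sum.reindex[OF inj]) (simp add: a_def)
  moreover have "preact Y n l r c = (\<lambda>w. \<Sum>t\<in>K. a t * w t)"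
    unfolding K_def preact_def[abs_def] by (rule ext, subst sum.reindex[OF inj]) (simp add: a_def)
  moreover have "K \<subseteq> J" using sub by (auto simp: K_def)
  ultimately show ?thesis
    using distributed_std_gaussian_linear_form[OF J, of K a] pos by simp
qed

lemma nn_integral_relu_preact_sq:
  assumes J: "finite J" and sub: "\<And>k. k < n \<Longrightarrow> (l, k, c) \<in> J"
  shows "(\<integral>\<^sup>+w. ennreal ((relu (preact Y n l r c w))\<^sup>2) \<partial>PiM J (\<lambda>_. std_gaussian))
       = ennreal (row_norm_sq Y n r / 2)"
proof (cases "row_norm_sq Y n r = 0")
  case True
  then show ?thesis by (simp add: preact_zero_row relu_def)
next
  case False
  then have pos: "0 < row_norm_sq Y n r" using row_norm_sq_nonneg[of Y n r] by linarith
  have "(\<integral>\<^sup>+w. ennreal ((relu (preact Y n l r c w))\<^sup>2) \<partial>PiM J (\<lambda>_. std_gaussian))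
      = (\<integral>\<^sup>+x. ennreal (normal_density 0 (sqrt (row_norm_sq Y n r)) x) * ennreal ((relu x)\<^sup>2) \<partial>lborel)"
    by (rule distributed_nn_integral[OF distributed_preact[OF J sub pos], symmetric]) measurable
  also have "\<dots> = ennreal (row_norm_sq Y n r / 2)"
    using pos by (subst nn_integral_normal_density_relu_sq) auto
  finally show ?thesis .
qed

lemma nn_integral_exp_preact_sq:
  assumes J: "finite J" and sub: "\<And>k. k < n \<Longrightarrow> (l, k, c) \<in> J" and pos: "0 < row_norm_sq Y n r"
  shows "(\<integral>\<^sup>+w. ennreal (exp ((preact Y n l r c w)\<^sup>2 / (4 * row_norm_sq Y n r))) \<partial>PiM J (\<lambda>_. std_gaussian))
       = ennreal (sqrt 2)"
proof -
  have "(\<integral>\<^sup>+w. ennreal (exp ((preact Y n l r c w)\<^sup>2 / (4 * row_norm_sq Y n r))) \<partial>PiM J (\<lambda>_. std_gaussian))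
      = (\<integral>\<^sup>+x. ennreal (normal_density 0 (sqrt (row_norm_sq Y n r)) x)
                * ennreal (exp (x\<^sup>2 / (4 * (sqrt (row_norm_sq Y n r))\<^sup>2))) \<partial>lborel)"
    using pos by (subst distributed_nn_integral[OF distributed_preact[OF J sub pos]]) (auto, measurable)
  also have "\<dots> = ennreal (sqrt 2)"
    using pos by (subst nn_integral_normal_density_exp_sq) auto
  finally show ?thesis .
qed

lemma nn_integral_relu_preact_sq_sum:
  assumes J: "finite J" and sub: "\<And>k c. k < n \<Longrightarrow> c < n' \<Longrightarrow> (l, k, c) \<in> J"
  shows "(\<integral>\<^sup>+w. ennreal (\<Sum>r<m. \<Sum>c<n'. (relu (preact Y n l r c w))\<^sup>2) \<partial>PiM J (\<lambda>_. std_gaussian))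
       = ennreal (real n' / 2 * (\<Sum>r<m. row_norm_sq Y n r))"
proof -
  have meas: "(\<lambda>w. ennreal ((relu (preact Y n l r c w))\<^sup>2)) \<in> borel_measurable (PiM J (\<lambda>_. std_gaussian))"
    if "c < n'" for r c
    using measurable_preact[of n l c J Y r] sub that by measurable
  have "(\<integral>\<^sup>+w. ennreal (\<Sum>r<m. \<Sum>c<n'. (relu (preact Y n l r c w))\<^sup>2) \<partial>PiM J (\<lambda>_. std_gaussian))
      = (\<integral>\<^sup>+w. (\<Sum>r<m. \<Sum>c<n'. ennreal ((relu (preact Y n l r c w))\<^sup>2)) \<partial>PiM J (\<lambda>_. std_gaussian))"
    by (rule nn_integral_cong) (simp add: sum_ennreal sum_nonneg)
  also have "\<dots> = (\<Sum>r<m. \<Sum>c<n'. (\<integral>\<^sup>+w. ennreal ((relu (preact Y n l r c w))\<^sup>2) \<partial>PiM J (\<lambda>_. std_gaussian)))"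
    by (subst nn_integral_sum) (intro borel_measurable_sum meas, simp, intro sum.cong refl nn_integral_sum meas, simp)
  also have "\<dots> = (\<Sum>r<m. \<Sum>c<n'. ennreal (row_norm_sq Y n r / 2))"
    using nn_integral_relu_preact_sq[OF J] sub by simp
  also have "\<dots> = (\<Sum>r<m. ennreal (\<Sum>c<n'. row_norm_sq Y n r / 2))"
    by (intro sum.cong refl sum_ennreal) simp
  also have "\<dots> = ennreal (real n' / 2 * (\<Sum>r<m. row_norm_sq Y n r))"
    by (subst sum_ennreal) (auto simp: sum_nonneg sum_distrib_left)
  finally show ?thesis .
qed

section \<open>Tail bound for one column\<close>

text \<open>Jensen's inequality for \<open>exp\<close> with weights \<open>s r / (\<Sum>r\<in>R. s r)\<close>; the right-hand side
  dominates the indicator of the tail event (the Chernoff step).\<close>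
lemma one_le_exp_mixture:
  fixes s x :: "'a \<Rightarrow> real"
  assumes R: "finite R" "R \<noteq> {}" and s: "\<And>r. r \<in> R \<Longrightarrow> 0 < s r"
    and tail: "t * (\<Sum>r\<in>R. s r) \<le> (\<Sum>r\<in>R. (x r)\<^sup>2)"
  shows "1 \<le> exp (- t / 4) / (\<Sum>r\<in>R. s r) * (\<Sum>r\<in>R. s r * exp ((x r)\<^sup>2 / (4 * s r)))"
proof -
  define F where "F = (\<Sum>r\<in>R. s r)"
  have F: "0 < F" unfolding F_def using R s by (intro sum_pos) auto
  have weights: "(\<Sum>r\<in>R. s r / F) = 1" using F by (simp add: F_def sum_divide_distrib[symmetric])
  have "exp (\<Sum>r\<in>R. (s r / F) *\<^sub>R ((x r)\<^sup>2 / (4 * s r)))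
      \<le> (\<Sum>r\<in>R. (s r / F) * exp ((x r)\<^sup>2 / (4 * s r)))"
    using convex_on_sum[OF R convex_on_exp[of 1] weights, of "\<lambda>r. (x r)\<^sup>2 / (4 * s r)"] s F
    by (simp add: less_imp_le)
  moreover have "(\<Sum>r\<in>R. (s r / F) *\<^sub>R ((x r)\<^sup>2 / (4 * s r))) = (\<Sum>r\<in>R. (x r)\<^sup>2) / (4 * F)"
    by (simp add: sum_divide_distrib) (rule sum.cong, use s F in force, use s F in fastforce)
  moreover have "(\<Sum>r\<in>R. (s r / F) * exp ((x r)\<^sup>2 / (4 * s r)))
      = (\<Sum>r\<in>R. s r * exp ((x r)\<^sup>2 / (4 * s r))) / F"
    by (simp add: sum_divide_distrib)
  ultimately have jensen: "exp ((\<Sum>r\<in>R. (x r)\<^sup>2) / (4 * F)) \<le> (\<Sum>r\<in>R. s r * exp ((x r)\<^sup>2 / (4 * s r))) / F"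
    by simp
  have "t / 4 \<le> (\<Sum>r\<in>R. (x r)\<^sup>2) / (4 * F)" using tail F by (simp add: F_def[symmetric] field_simps)
  then have "1 \<le> exp (- t / 4) * exp ((\<Sum>r\<in>R. (x r)\<^sup>2) / (4 * F))"
    by (simp add: mult_exp_exp)
  also have "\<dots> \<le> exp (- t / 4) * ((\<Sum>r\<in>R. s r * exp ((x r)\<^sup>2 / (4 * s r))) / F)"
    by (rule mult_left_mono[OF jensen]) simp
  finally show ?thesis by (simp add: F_def)
qed

lemma nn_integral_exp_preact_mixture:
  assumes J: "finite J" and sub: "\<And>k. k < n \<Longrightarrow> (l, k, c) \<in> J"
    and R: "finite R" and pos: "\<And>r. r \<in> R \<Longrightarrow> 0 < row_norm_sq Y n r"
  shows "(\<integral>\<^sup>+w. ennreal (\<Sum>r\<in>R. row_norm_sq Y n r * exp ((preact Y n l r c w)\<^sup>2 / (4 * row_norm_sq Y n r)))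
            \<partial>PiM J (\<lambda>_. std_gaussian))
       = ennreal (sqrt 2 * (\<Sum>r\<in>R. row_norm_sq Y n r))"
proof -
  let ?M = "PiM J (\<lambda>_. std_gaussian)"
  let ?e = "\<lambda>r w. exp ((preact Y n l r c w)\<^sup>2 / (4 * row_norm_sq Y n r))"
  have meas: "(\<lambda>w. ennreal (?e r w)) \<in> borel_measurable ?M" for r
    using measurable_preact[OF sub] by measurable
  have "(\<integral>\<^sup>+w. ennreal (\<Sum>r\<in>R. row_norm_sq Y n r * ?e r w) \<partial>?M)
      = (\<integral>\<^sup>+w. (\<Sum>r\<in>R. ennreal (row_norm_sq Y n r) * ennreal (?e r w)) \<partial>?M)"
    by (rule nn_integral_cong) (simp add: sum_ennreal[symmetric] ennreal_mult)
  also have "\<dots> = (\<Sum>r\<in>R. ennreal (row_norm_sq Y n r) * (\<integral>\<^sup>+w. ennreal (?e r w) \<partial>?M))"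
    using meas by (simp add: nn_integral_sum nn_integral_cmult)
  also have "\<dots> = (\<Sum>r\<in>R. ennreal (row_norm_sq Y n r) * ennreal (sqrt 2))"
    using nn_integral_exp_preact_sq[OF J sub] pos by simp
  also have "\<dots> = ennreal (sqrt 2 * (\<Sum>r\<in>R. row_norm_sq Y n r))"
    by (simp add: sum_ennreal ennreal_mult[symmetric] sum_distrib_left mult.commute)
  finally show ?thesis .
qed

lemma emeasure_column_tail:
  assumes J: "finite J" and sub: "\<And>k. k < n \<Longrightarrow> (l, k, c) \<in> J"
  shows "emeasure (PiM J (\<lambda>_. std_gaussian))
           {w \<in> space (PiM J (\<lambda>_. std_gaussian)).
              t * (\<Sum>r<m. row_norm_sq Y n r) < (\<Sum>r<m. (relu (preact Y n l r c w))\<^sup>2)}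
       \<le> ennreal (sqrt 2 * exp (- t / 4))"
    (is "emeasure ?M ?A \<le> _")
proof (cases "(\<Sum>r<m. row_norm_sq Y n r) = 0")
  case True
  then have "\<And>r. r < m \<Longrightarrow> row_norm_sq Y n r = 0"
    by (subst (asm) sum_nonneg_eq_0_iff) auto
  then have empty: "?A = {}"
    using True by (auto simp: preact_zero_row relu_def)
  show ?thesis by (simp only: empty) simp
next
  case False
  define R where "R = {r\<in>{..<m}. 0 < row_norm_sq Y n r}"
  define F where "F = (\<Sum>r\<in>R. row_norm_sq Y n r)"
  have F_eq: "(\<Sum>r<m. row_norm_sq Y n r) = F"
    unfolding F_def R_def by (rule sum.mono_neutral_right) (auto simp: less_le)
  have F: "0 < F" using False F_eq by (metis less_eq_real_def row_norm_sq_nonneg sum_nonneg)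
  have R: "finite R" "R \<noteq> {}"
    using F unfolding F_def R_def by (simp, metis sum.empty less_irrefl)
  define g where "g = (\<lambda>w. \<Sum>r\<in>R. row_norm_sq Y n r * exp ((preact Y n l r c w)\<^sup>2 / (4 * row_norm_sq Y n r)))"
  have A: "?A \<in> sets ?M" using measurable_preact[OF sub] by measurable
  have "indicator ?A w \<le> ennreal (exp (- t / 4) / F) * ennreal (g w)" for w
  proof (cases "w \<in> ?A")
    case True
    then have "t * F < (\<Sum>r<m. (relu (preact Y n l r c w))\<^sup>2)" by (simp add: F_eq)
    also have "\<dots> \<le> (\<Sum>r<m. (preact Y n l r c w)\<^sup>2)" by (intro sum_mono relu_sq_le)
    also have "\<dots> = (\<Sum>r\<in>R. (preact Y n l r c w)\<^sup>2)"
      unfolding R_def by (rule sum.mono_neutral_right) (auto simp: less_le preact_zero_row)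
    finally have "1 \<le> exp (- t / 4) / F * g w"
      using one_le_exp_mixture[OF R, of "row_norm_sq Y n"] by (auto simp: F_def g_def R_def)
    moreover have "ennreal (exp (- t / 4) / F) * ennreal (g w) = ennreal (exp (- t / 4) / F * g w)"
      using F by (intro ennreal_mult'[symmetric]) simp
    ultimately show ?thesis using True by simp
  qed simp
  then have "(\<integral>\<^sup>+w. indicator ?A w \<partial>?M) \<le> (\<integral>\<^sup>+w. ennreal (exp (- t / 4) / F) * ennreal (g w) \<partial>?M)"
    by (intro nn_integral_mono)
  then have "emeasure ?M ?A \<le> (\<integral>\<^sup>+w. ennreal (exp (- t / 4) / F) * ennreal (g w) \<partial>?M)"
    using A by simp
  also have "\<dots> = ennreal (exp (- t / 4) / F) * ennreal (sqrt 2 * F)"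
    using measurable_preact[OF sub] nn_integral_exp_preact_mixture[OF J sub R(1)]
    by (subst nn_integral_cmult) (auto simp: g_def F_def R_def)
  also have "\<dots> = ennreal (sqrt 2 * exp (- t / 4))"
    using F by (simp add: ennreal_mult[symmetric])
  finally show ?thesis .
qed

lemma sets_some_column_tail:
  assumes sub: "\<And>k c. k < n \<Longrightarrow> c < n' \<Longrightarrow> (l, k, c) \<in> J"
  shows "{w \<in> space (PiM J (\<lambda>_. std_gaussian)).
            \<exists>c<n'. t * (\<Sum>r<m. row_norm_sq Y n r) < (\<Sum>r<m. (relu (preact Y n l r c w))\<^sup>2)}
       \<in> sets (PiM J (\<lambda>_. std_gaussian))"
proof -
  let ?M = "PiM J (\<lambda>_. std_gaussian)"
  have "{w \<in> space ?M. \<exists>c<n'. t * (\<Sum>r<m. row_norm_sq Y n r) < (\<Sum>r<m. (relu (preact Y n l r c w))\<^sup>2)}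
      = (\<Union>c<n'. {w \<in> space ?M. t * (\<Sum>r<m. row_norm_sq Y n r) < (\<Sum>r<m. (relu (preact Y n l r c w))\<^sup>2)})"
    by auto
  also have "\<dots> \<in> sets ?M"
  proof (intro sets.finite_UN)
    fix c assume "c \<in> {..<n'}"
    then have "preact Y n l r c \<in> borel_measurable ?M" for r
      using sub by (intro measurable_preact) auto
    then show "{w \<in> space ?M. t * (\<Sum>r<m. row_norm_sq Y n r) < (\<Sum>r<m. (relu (preact Y n l r c w))\<^sup>2)} \<in> sets ?M"
      by measurable
  qed simp
  finally show ?thesis .
qed

lemma emeasure_some_column_tail:
  assumes J: "finite J" and sub: "\<And>k c. k < n \<Longrightarrow> c < n' \<Longrightarrow> (l, k, c) \<in> J"
  shows "emeasure (PiM J (\<lambda>_. std_gaussian))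
           {w \<in> space (PiM J (\<lambda>_. std_gaussian)).
              \<exists>c<n'. t * (\<Sum>r<m. row_norm_sq Y n r) < (\<Sum>r<m. (relu (preact Y n l r c w))\<^sup>2)}
       \<le> ennreal (real n' * (sqrt 2 * exp (- t / 4)))"
proof -
  let ?M = "PiM J (\<lambda>_. std_gaussian)"
  define A where "A = (\<lambda>c. {w \<in> space ?M.
      t * (\<Sum>r<m. row_norm_sq Y n r) < (\<Sum>r<m. (relu (preact Y n l r c w))\<^sup>2)})"
  have A: "A c \<in> sets ?M" if "c < n'" for c
    unfolding A_def using measurable_preact[of n l c J Y] sub that by measurable
  have "emeasure ?M (\<Union>c<n'. A c) \<le> (\<Sum>c<n'. emeasure ?M (A c))"
    using A by (intro emeasure_subadditive_finite) auto
  also have "\<dots> \<le> (\<Sum>c<n'. ennreal (sqrt 2 * exp (- t / 4)))"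
    unfolding A_def using sub by (intro sum_mono emeasure_column_tail[OF J]) auto
  also have "\<dots> = ennreal (real n' * (sqrt 2 * exp (- t / 4)))"
    by (simp add: ennreal_of_nat_eq_real_of_nat ennreal_mult)
  moreover have "{w \<in> space ?M. \<exists>c<n'. t * (\<Sum>r<m. row_norm_sq Y n r) < (\<Sum>r<m. (relu (preact Y n l r c w))\<^sup>2)}
      = (\<Union>c<n'. A c)"
    by (auto simp: A_def)
  ultimately show ?thesis by simp
qed

section \<open>Layers as functions of the weights\<close>

definition weight_block :: "(nat \<Rightarrow> nat) \<Rightarrow> nat \<Rightarrow> (nat \<times> nat \<times> nat) set" where
  "weight_block N l = {l} \<times> {..<N (l - 1)} \<times> {..<N l}"

lemma finite_weight_block [simp]: "finite (weight_block N l)"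
  by (simp add: weight_block_def)

lemma weight_index_0: "weight_index 0 N = {}"
  by (auto simp: weight_index_def)

lemma weight_index_Suc: "weight_index (Suc i) N = weight_index i N \<union> weight_block N (Suc i)"
  unfolding weight_index_def weight_block_def by (auto simp: le_Suc_eq)

lemma finite_weight_index [simp]: "finite (weight_index i N)"
  by (induction i) (auto simp: weight_index_Suc weight_index_0)

lemma weight_index_mono: "i \<le> L \<Longrightarrow> weight_index i N \<subseteq> weight_index L N"
  by (auto simp: weight_index_def)

lemma weight_index_split:
  assumes "weight_index (Suc i) N \<subseteq> I"
  defines "I' \<equiv> I - weight_block N (Suc i)"
  shows "I = I' \<union> weight_block N (Suc i)" "I' \<inter> weight_block N (Suc i) = {}"
    "weight_index i N \<subseteq> I'"
  using assms by (auto simp: weight_index_Suc weight_index_def weight_block_def)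

lemma layer_Suc_preact: "layer N X w (Suc i) r c = relu (preact (layer N X w i) (N i) (Suc i) r c w)"
  by (simp add: preact_def)

lemma layer_cong:
  assumes "\<And>t. t \<in> weight_index i N \<Longrightarrow> w t = w' t" and "c < N i"
  shows "layer N X w i r c = layer N X w' i r c"
  using assms
proof (induction i arbitrary: c)
  case (Suc i)
  have "w (Suc i, k, c) = w' (Suc i, k, c)" if "k < N i" for k
    using Suc.prems that by (auto simp: weight_index_def)
  moreover have "layer N X w i r k = layer N X w' i r k" if "k < N i" for k
    using Suc.IH[OF _ that] Suc.prems(1) by (auto simp: weight_index_Suc)
  ultimately show ?case by simp
qed simp

lemma measurable_layer:
  assumes "weight_index i N \<subseteq> I" and "c < N i"
  shows "(\<lambda>w. layer N X w i r c) \<in> borel_measurable (PiM I (\<lambda>_. std_gaussian))"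
  using assms
proof (induction i arbitrary: c)
  case (Suc i)
  have "(\<lambda>w. preact (layer N X w i) (N i) (Suc i) r c w) \<in> borel_measurable (PiM I (\<lambda>_. std_gaussian))"
    unfolding preact_def using Suc.prems Suc.IH
    by (intro borel_measurable_sum borel_measurable_times measurable_std_gaussian_coordinate)
       (auto simp: weight_index_Suc weight_block_def)
  then show ?case by (simp only: layer_Suc_preact) (rule measurable_compose[OF _ borel_measurable_relu])
qed simp

lemma measurable_frob_sq_layer:
  "weight_index i N \<subseteq> I \<Longrightarrow>
    (\<lambda>w. \<Sum>r<m. \<Sum>c<N i. (layer N X w i r c)\<^sup>2) \<in> borel_measurable (PiM I (\<lambda>_. std_gaussian))"
  using measurable_layer by (intro borel_measurable_sum borel_measurable_power) auto

lemma layer_Suc_merge: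
  assumes "weight_index i N \<subseteq> I" "I \<inter> weight_block N (Suc i) = {}" "c < N (Suc i)"
  shows "layer N X (merge I (weight_block N (Suc i)) (x, y)) (Suc i) r c
       = relu (preact (layer N X x i) (N i) (Suc i) r c y)"
proof -
  let ?z = "merge I (weight_block N (Suc i)) (x, y)"
  have "layer N X ?z i r k = layer N X x i r k" if "k < N i" for k
    using assms(1,2) that by (intro layer_cong) auto
  moreover have "?z (Suc i, k, c) = y (Suc i, k, c)" if "k < N i" for k
    using assms(2,3) that by (simp add: weight_block_def)
  ultimately show ?thesis by (simp add: layer_Suc_preact preact_def)
qed

lemma nn_integral_frob_sq_layer_Suc_section:
  assumes "weight_index i N \<subseteq> I" "I \<inter> weight_block N (Suc i) = {}"
  shows "(\<integral>\<^sup>+y. ennreal (\<Sum>r<m. \<Sum>c<N (Suc i). (layer N X (merge I (weight_block N (Suc i)) (x, y)) (Suc i) r c)\<^sup>2)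
            \<partial>PiM (weight_block N (Suc i)) (\<lambda>_. std_gaussian))
       = ennreal (real (N (Suc i)) / 2 * (\<Sum>r<m. \<Sum>a<N i. (layer N X x i r a)\<^sup>2))"
proof -
  have "(\<integral>\<^sup>+y. ennreal (\<Sum>r<m. \<Sum>c<N (Suc i). (layer N X (merge I (weight_block N (Suc i)) (x, y)) (Suc i) r c)\<^sup>2)
            \<partial>PiM (weight_block N (Suc i)) (\<lambda>_. std_gaussian))
      = (\<integral>\<^sup>+y. ennreal (\<Sum>r<m. \<Sum>c<N (Suc i). (relu (preact (layer N X x i) (N i) (Suc i) r c y))\<^sup>2)
            \<partial>PiM (weight_block N (Suc i)) (\<lambda>_. std_gaussian))"
    using layer_Suc_merge[OF assms] by simp
  also have "\<dots> = ennreal (real (N (Suc i)) / 2 * (\<Sum>r<m. row_norm_sq (layer N X x i) (N i) r))"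
    by (rule nn_integral_relu_preact_sq_sum) (auto simp: weight_block_def)
  finally show ?thesis by (simp add: row_norm_sq_def)
qed

lemma nn_integral_frob_sq_layer:
  assumes "finite I" "weight_index i N \<subseteq> I"
  shows "(\<integral>\<^sup>+w. ennreal (\<Sum>r<m. \<Sum>c<N i. (layer N X w i r c)\<^sup>2) \<partial>PiM I (\<lambda>_. std_gaussian))
       = ennreal ((\<Sum>r<m. \<Sum>c<N 0. (X r c)\<^sup>2) * (\<Prod>k=1..i. real (N k)) / 2 ^ i)"
  using assms
proof (induction i arbitrary: I)
  case 0
  interpret prob_space "PiM I (\<lambda>_. std_gaussian)" by (rule prob_space_PiM_std_gaussian)
  show ?case by (simp add: emeasure_space_1)
next
  case (Suc i)
  interpret product_sigma_finite "\<lambda>_::nat \<times> nat \<times> nat. std_gaussian"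
    by (rule product_sigma_finite_std_gaussian)
  define J where "J = weight_block N (Suc i)"
  define I' where "I' = I - J"
  note split = weight_index_split[OF Suc.prems(2), folded J_def I'_def]
  let ?F0 = "\<Sum>r<m. \<Sum>c<N 0. (X r c)\<^sup>2"
  have "(\<integral>\<^sup>+w. ennreal (\<Sum>r<m. \<Sum>c<N (Suc i). (layer N X w (Suc i) r c)\<^sup>2) \<partial>PiM (I' \<union> J) (\<lambda>_. std_gaussian))
      = (\<integral>\<^sup>+x. (\<integral>\<^sup>+y. ennreal (\<Sum>r<m. \<Sum>c<N (Suc i). (layer N X (merge I' J (x, y)) (Suc i) r c)\<^sup>2)
             \<partial>PiM J (\<lambda>_. std_gaussian)) \<partial>PiM I' (\<lambda>_. std_gaussian))"
  proof (rule product_nn_integral_fold)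
    show "finite I'" "finite J" using Suc.prems(1) by (auto simp: I'_def J_def)
    show "(\<lambda>w. ennreal (\<Sum>r<m. \<Sum>c<N (Suc i). (layer N X w (Suc i) r c)\<^sup>2))
        \<in> borel_measurable (PiM (I' \<union> J) (\<lambda>_. std_gaussian))"
      using measurable_frob_sq_layer[of "Suc i" N "I' \<union> J"] Suc.prems(2) split(1)
      by (intro measurable_compose[OF _ measurable_ennreal]) auto
  qed (rule split(2))
  also have "\<dots> = (\<integral>\<^sup>+x. ennreal (real (N (Suc i)) / 2) * ennreal (\<Sum>r<m. \<Sum>a<N i. (layer N X x i r a)\<^sup>2)
             \<partial>PiM I' (\<lambda>_. std_gaussian))"
  proof (rule nn_integral_cong)
    fix x
    show "(\<integral>\<^sup>+y. ennreal (\<Sum>r<m. \<Sum>c<N (Suc i). (layer N X (merge I' J (x, y)) (Suc i) r c)\<^sup>2)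
             \<partial>PiM J (\<lambda>_. std_gaussian))
        = ennreal (real (N (Suc i)) / 2) * ennreal (\<Sum>r<m. \<Sum>a<N i. (layer N X x i r a)\<^sup>2)"
      unfolding J_def nn_integral_frob_sq_layer_Suc_section[OF split(3) split(2)[unfolded J_def]]
      by (rule ennreal_mult) (auto intro!: sum_nonneg)
  qed
  also have "\<dots> = ennreal (real (N (Suc i)) / 2) * ennreal (?F0 * (\<Prod>k=1..i. real (N k)) / 2 ^ i)"
    using Suc.prems split measurable_frob_sq_layer[of i N I']
    by (subst nn_integral_cmult) (auto simp: Suc.IH)
  also have "\<dots> = ennreal (?F0 * (\<Prod>k=1..Suc i. real (N k)) / 2 ^ Suc i)"
    by (simp add: ennreal_mult[symmetric] sum_nonneg prod_nonneg prod.nat_ivl_Suc' mult_ac)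
  finally show ?case using split(1) by simp
qed

lemma power2_frob_norm: "(frob_norm m n A)\<^sup>2 = (\<Sum>r<m. \<Sum>c<n. (A r c)\<^sup>2)"
  by (simp add: frob_norm_def sum_nonneg)

lemma integral_frob_norm_sq_layer:
  assumes "i \<le> L"
  shows "(\<integral>w. (frob_norm m (N i) (layer N X w i))\<^sup>2 \<partial>weight_space L N)
       = (frob_norm m (N 0) X)\<^sup>2 * (\<Prod>k=1..i. real (N k)) / 2 ^ i"
proof -
  have index: "weight_index i N \<subseteq> weight_index L N" using assms by (rule weight_index_mono)
  have "(\<integral>w. (frob_norm m (N i) (layer N X w i))\<^sup>2 \<partial>weight_space L N)
      = enn2real (\<integral>\<^sup>+w. ennreal (\<Sum>r<m. \<Sum>c<N i. (layer N X w i r c)\<^sup>2) \<partial>weight_space L N)"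
    unfolding power2_frob_norm weight_space_def using measurable_frob_sq_layer[OF index]
    by (intro integral_eq_nn_integral) (auto intro!: sum_nonneg)
  also have "\<dots> = (frob_norm m (N 0) X)\<^sup>2 * (\<Prod>k=1..i. real (N k)) / 2 ^ i"
    unfolding weight_space_def power2_frob_norm nn_integral_frob_sq_layer[OF finite_weight_index index]
    by (simp add: sum_nonneg prod_nonneg)
  finally show ?thesis .
qed

section \<open>Columns of the layers with high probability\<close>

definition large_column_event ::
    "nat \<Rightarrow> (nat \<Rightarrow> nat) \<Rightarrow> (nat \<Rightarrow> nat \<Rightarrow> real) \<Rightarrow> real \<Rightarrow> nat \<Rightarrow> (nat \<times> nat \<times> nat \<Rightarrow> real) set" where
  "large_column_event m N X t k = {w. \<exists>c<N k.
      t * (\<Sum>r<m. \<Sum>a<N (k - 1). (layer N X w (k - 1) r a)\<^sup>2) < (\<Sum>r<m. (layer N X w k r c)\<^sup>2)}"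

lemma sets_large_column_event:
  assumes "weight_index (Suc i) N \<subseteq> I"
  shows "large_column_event m N X t (Suc i) \<inter> space (PiM I (\<lambda>_. std_gaussian)) \<in> sets (PiM I (\<lambda>_. std_gaussian))"
proof -
  have "large_column_event m N X t (Suc i) \<inter> space (PiM I (\<lambda>_. std_gaussian))
      = {w \<in> space (PiM I (\<lambda>_. std_gaussian)). \<exists>c\<in>{..<N (Suc i)}.
           t * (\<Sum>r<m. \<Sum>a<N i. (layer N X w i r a)\<^sup>2) < (\<Sum>r<m. (layer N X w (Suc i) r c)\<^sup>2)}"
    by (auto simp: large_column_event_def)
  also have "\<dots> \<in> sets (PiM I (\<lambda>_. std_gaussian))"
    using measurable_layer[of i N I] measurable_layer[OF assms] assms
    by (intro sets.sets_Collect_finite_Ex borel_measurable_less borel_measurable_sum borel_measurable_power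
          borel_measurable_times borel_measurable_const) (auto simp: weight_index_Suc)
  finally show ?thesis .
qed

lemma nn_integral_large_column_event_section:
  assumes "weight_index i N \<subseteq> I" "I \<inter> weight_block N (Suc i) = {}"
  shows "(\<integral>\<^sup>+y. indicator (large_column_event m N X t (Suc i)) (merge I (weight_block N (Suc i)) (x, y))
            \<partial>PiM (weight_block N (Suc i)) (\<lambda>_. std_gaussian))
       \<le> ennreal (real (N (Suc i)) * (sqrt 2 * exp (- t / 4)))"
proof -
  let ?M = "PiM (weight_block N (Suc i)) (\<lambda>_. std_gaussian)"
  define S where "S = {y \<in> space ?M. \<exists>c<N (Suc i). t * (\<Sum>r<m. row_norm_sq (layer N X x i) (N i) r)
      < (\<Sum>r<m. (relu (preact (layer N X x i) (N i) (Suc i) r c y))\<^sup>2)}"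
  have "layer N X (merge I (weight_block N (Suc i)) (x, y)) i r a = layer N X x i r a" if "a < N i" for y r a
    using assms that by (intro layer_cong) auto
  then have frob: "(\<Sum>r<m. \<Sum>a<N i. (layer N X (merge I (weight_block N (Suc i)) (x, y)) i r a)\<^sup>2)
      = (\<Sum>r<m. row_norm_sq (layer N X x i) (N i) r)" for y
    by (simp add: row_norm_sq_def)
  have col: "(\<Sum>r<m. (layer N X (merge I (weight_block N (Suc i)) (x, y)) (Suc i) r c)\<^sup>2)
      = (\<Sum>r<m. (relu (preact (layer N X x i) (N i) (Suc i) r c y))\<^sup>2)" if "c < N (Suc i)" for y c
    using layer_Suc_merge[OF assms that] by simp
  have "merge I (weight_block N (Suc i)) (x, y) \<in> large_column_event m N X t (Suc i) \<longleftrightarrow> y \<in> S"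
    if "y \<in> space ?M" for y
    unfolding large_column_event_def S_def using that
    by (simp only: mem_Collect_eq diff_Suc_1 frob) (auto simp: col simp del: layer.simps)
  then have pointwise: "indicator (large_column_event m N X t (Suc i)) (merge I (weight_block N (Suc i)) (x, y))
      = (indicator S y :: ennreal)" if "y \<in> space ?M" for y
    using that by (simp add: indicator_def)
  have S: "S \<in> sets ?M"
    unfolding S_def by (rule sets_some_column_tail) (auto simp: weight_block_def)
  have "(\<integral>\<^sup>+y. indicator (large_column_event m N X t (Suc i)) (merge I (weight_block N (Suc i)) (x, y)) \<partial>?M)
      = (\<integral>\<^sup>+y. indicator S y \<partial>?M)"
    by (rule nn_integral_cong) (rule pointwise)
  also have "\<dots> = emeasure ?M S" using S by (rule nn_integral_indicator)
  also have "\<dots> \<le> ennreal (real (N (Suc i)) * (sqrt 2 * exp (- t / 4)))"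
    unfolding S_def by (rule emeasure_some_column_tail) (auto simp: weight_block_def)
  finally show ?thesis .
qed

lemma emeasure_large_column_event:
  assumes "finite I" "weight_index (Suc i) N \<subseteq> I"
  shows "emeasure (PiM I (\<lambda>_. std_gaussian)) (large_column_event m N X t (Suc i) \<inter> space (PiM I (\<lambda>_. std_gaussian)))
       \<le> ennreal (real (N (Suc i)) * (sqrt 2 * exp (- t / 4)))"
proof -
  interpret product_sigma_finite "\<lambda>_::nat \<times> nat \<times> nat. std_gaussian"
    by (rule product_sigma_finite_std_gaussian)
  define J where "J = weight_block N (Suc i)"
  define I' where "I' = I - J"
  note split = weight_index_split[OF assms(2), folded J_def I'_def]
  interpret I': prob_space "PiM I' (\<lambda>_. std_gaussian)" by (rule prob_space_PiM_std_gaussian)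
  let ?B = "large_column_event m N X t (Suc i) \<inter> space (PiM (I' \<union> J) (\<lambda>_. std_gaussian))"
  have B: "?B \<in> sets (PiM (I' \<union> J) (\<lambda>_. std_gaussian))"
    using sets_large_column_event assms(2) split(1) by metis
  have "emeasure (PiM I (\<lambda>_. std_gaussian)) (large_column_event m N X t (Suc i) \<inter> space (PiM I (\<lambda>_. std_gaussian)))
      = (\<integral>\<^sup>+w. indicator ?B w \<partial>PiM (I' \<union> J) (\<lambda>_. std_gaussian))"
    using B split(1) by simp
  also have "\<dots> = (\<integral>\<^sup>+x. (\<integral>\<^sup>+y. indicator ?B (merge I' J (x, y)) \<partial>PiM J (\<lambda>_. std_gaussian)) \<partial>PiM I' (\<lambda>_. std_gaussian))"
    using B assms(1) by (intro product_nn_integral_fold split(2)) (auto simp: I'_def J_def)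
  also have "\<dots> \<le> (\<integral>\<^sup>+x. ennreal (real (N (Suc i)) * (sqrt 2 * exp (- t / 4))) \<partial>PiM I' (\<lambda>_. std_gaussian))"
  proof (intro nn_integral_mono order.trans[OF _ nn_integral_large_column_event_section])
    fix x
    show "(\<integral>\<^sup>+y. indicator ?B (merge I' J (x, y)) \<partial>PiM J (\<lambda>_. std_gaussian))
        \<le> (\<integral>\<^sup>+y. indicator (large_column_event m N X t (Suc i)) (merge I' (weight_block N (Suc i)) (x, y))
              \<partial>PiM (weight_block N (Suc i)) (\<lambda>_. std_gaussian))"
      unfolding J_def by (intro nn_integral_mono) (simp split: split_indicator)
  qed (use split(2,3) in \<open>auto simp: J_def\<close>)
  also have "\<dots> = ennreal (real (N (Suc i)) * (sqrt 2 * exp (- t / 4)))"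
    by (simp add: I'.emeasure_space_1)
  finally show ?thesis .
qed

lemma measure_large_column_event:
  assumes "Suc j \<le> L" "0 < N j"
  shows "measure (weight_space L N)
           (large_column_event m N X (4 * real p * ln (real (N j))) (Suc j) \<inter> space (weight_space L N))
       \<le> sqrt 2 * real (N (Suc j)) / real (N j) ^ p"
proof -
  interpret prob_space "weight_space L N"
    unfolding weight_space_def by (rule prob_space_PiM_std_gaussian)
  have "exp (- (4 * real p * ln (real (N j))) / 4) = 1 / real (N j) ^ p"
    using assms(2) by (simp add: exp_minus exp_of_nat_mult inverse_eq_divide)
  then have "emeasure (weight_space L N)
           (large_column_event m N X (4 * real p * ln (real (N j))) (Suc j) \<inter> space (weight_space L N))
      \<le> ennreal (real (N (Suc j)) * (sqrt 2 * (1 / real (N j) ^ p)))"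
    using emeasure_large_column_event[OF finite_weight_index weight_index_mono[OF assms(1)],
        where m=m and X=X and t="4 * real p * ln (real (N j))"]
    unfolding weight_space_def by simp
  then show ?thesis
    by (simp add: emeasure_eq_measure mult_ac)
qed

lemma column_sq_layer_Suc_le:
  assumes "w \<notin> large_column_event m N X t (Suc j)" "c < N (Suc j)"
  shows "(\<Sum>r<m. (layer N X w (Suc j) r c)\<^sup>2) \<le> t * (\<Sum>r<m. \<Sum>a<N j. (layer N X w j r a)\<^sup>2)"
  using assms unfolding large_column_event_def by (simp del: layer.simps) (meson not_less)

lemma frob_sq_layer_le_outside_large_columns:
  assumes "\<And>j. j < i \<Longrightarrow> w \<notin> large_column_event m N X (\<tau> j) (Suc j)" "\<And>j. j < i \<Longrightarrow> 0 \<le> \<tau> j"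
  shows "(\<Sum>r<m. \<Sum>c<N i. (layer N X w i r c)\<^sup>2) \<le> (\<Prod>j<i. real (N (Suc j)) * \<tau> j) * (\<Sum>r<m. \<Sum>c<N 0. (X r c)\<^sup>2)"
  using assms
proof (induction i)
  case (Suc i)
  let ?F = "\<lambda>k. \<Sum>r<m. \<Sum>c<N k. (layer N X w k r c)\<^sup>2"
  have "?F (Suc i) = (\<Sum>c<N (Suc i). \<Sum>r<m. (layer N X w (Suc i) r c)\<^sup>2)"
    by (rule sum.swap)
  also have "\<dots> \<le> (\<Sum>c<N (Suc i). \<tau> i * ?F i)"
    using Suc.prems(1) by (intro sum_mono column_sq_layer_Suc_le) auto
  also have "\<dots> = real (N (Suc i)) * \<tau> i * ?F i"
    by simp
  also have "\<dots> \<le> real (N (Suc i)) * \<tau> i * ((\<Prod>j<i. real (N (Suc j)) * \<tau> j) * (\<Sum>r<m. \<Sum>c<N 0. (X r c)\<^sup>2))"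
    using Suc by (intro mult_left_mono) auto
  also have "\<dots> = (\<Prod>j<Suc i. real (N (Suc j)) * \<tau> j) * (\<Sum>r<m. \<Sum>c<N 0. (X r c)\<^sup>2)"
    by (simp add: mult_ac)
  finally show ?case .
qed simp

lemma prod_growth_factors:
  fixes a b :: "nat \<Rightarrow> real"
  shows "c * a j * (\<Prod>l<j. b (Suc l) * (c * a l))
       = c ^ Suc j * (\<Prod>k\<in>{1..<Suc j}. b k) * (\<Prod>k\<in>{0..<Suc j}. a k)"
proof -
  have "(\<Prod>l<j. b (Suc l)) = (\<Prod>k\<in>{1..<Suc j}. b k)"
    using prod.shift_bounds_Suc_ivl[of b 0 j] by (simp add: lessThan_atLeast0)
  then have "(\<Prod>l<j. b (Suc l) * (c * a l)) = (\<Prod>k\<in>{1..<Suc j}. b k) * c ^ j * (\<Prod>k\<in>{0..<j}. a k)"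
    by (simp add: prod.distrib lessThan_atLeast0)
  then show ?thesis by (simp add: prod.atLeast0_lessThan_Suc mult_ac)
qed

lemma ln_of_nat_nonneg: "0 \<le> ln (real n)"
  by (cases n) auto

lemma sqrt_power_eq_powr: "0 < x \<Longrightarrow> sqrt (x ^ i) = x powr (real i / 2)"
  by (simp add: powr_half_sqrt[symmetric] powr_realpow[symmetric] powr_powr)

lemma max_col_norm_layer_le_outside_large_columns:
  fixes p :: nat
  assumes good: "\<And>j. j < i \<Longrightarrow> w \<notin> large_column_event m N X (4 * real p * ln (real (N j))) (Suc j)"
    and "0 < N i" "1 \<le> i" "0 < p"
  shows "Max ((\<lambda>j. col_norm m (layer N X w i) j) ` {..<N i})
       \<le> (4 * real p) powr (real i / 2) * sqrt (\<Prod>k\<in>{1..<i}. real (N k))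
           * sqrt (\<Prod>k\<in>{0..<i}. ln (real (N k))) * frob_norm m (N 0) X"
proof -
  obtain j where i: "i = Suc j" using \<open>1 \<le> i\<close> by (cases i) auto
  define \<tau> where "\<tau> l = 4 * real p * ln (real (N l))" for l
  have \<tau>: "0 \<le> \<tau> l" for l by (simp add: \<tau>_def ln_of_nat_nonneg)
  let ?F0 = "\<Sum>r<m. \<Sum>c<N 0. (X r c)\<^sup>2"
  have "col_norm m (layer N X w i) c
      \<le> sqrt ((4 * real p) ^ i * (\<Prod>k\<in>{1..<i}. real (N k)) * (\<Prod>k\<in>{0..<i}. ln (real (N k))) * ?F0)"
    if "c < N i" for c
  proof -
    have "(\<Sum>r<m. (layer N X w i r c)\<^sup>2) \<le> \<tau> j * (\<Sum>r<m. \<Sum>a<N j. (layer N X w j r a)\<^sup>2)"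
      unfolding i \<tau>_def using good that i by (intro column_sq_layer_Suc_le) auto
    also have "\<dots> \<le> \<tau> j * ((\<Prod>l<j. real (N (Suc l)) * \<tau> l) * ?F0)"
      using good i \<tau> by (intro mult_left_mono frob_sq_layer_le_outside_large_columns) (auto simp: \<tau>_def)
    also have "\<dots> = (4 * real p) ^ i * (\<Prod>k\<in>{1..<i}. real (N k)) * (\<Prod>k\<in>{0..<i}. ln (real (N k))) * ?F0"
      unfolding i \<tau>_def prod_growth_factors[symmetric] by (simp add: mult_ac)
    finally show ?thesis unfolding col_norm_def by (rule real_sqrt_le_mono)
  qed
  moreover have "sqrt ((4 * real p) ^ i * (\<Prod>k\<in>{1..<i}. real (N k)) * (\<Prod>k\<in>{0..<i}. ln (real (N k))) * ?F0)
      = (4 * real p) powr (real i / 2) * sqrt (\<Prod>k\<in>{1..<i}. real (N k))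
          * sqrt (\<Prod>k\<in>{0..<i}. ln (real (N k))) * frob_norm m (N 0) X"
    using \<open>0 < p\<close> by (simp only: real_sqrt_mult sqrt_power_eq_powr frob_norm_def)
  ultimately show ?thesis
    using \<open>0 < N i\<close> by (subst Max_le_iff) auto
qed

lemma (in prob_space) prob_ge_one_minus_union_bound:
  assumes "finite K" "\<And>k. k \<in> K \<Longrightarrow> B k \<in> events" "\<And>k. k \<in> K \<Longrightarrow> prob (B k) \<le> b k"
    and "T \<in> events" "space M - (\<Union>k\<in>K. B k) \<subseteq> T"
  shows "1 - sum b K \<le> prob T"
proof -
  have "1 - sum b K \<le> 1 - (\<Sum>k\<in>K. prob (B k))"
    using assms by (intro diff_left_mono sum_mono) auto
  also have "\<dots> \<le> 1 - prob (\<Union>k\<in>K. B k)"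
    using assms by (intro diff_left_mono measure_UNION_le) auto
  also have "\<dots> = prob (space M - (\<Union>k\<in>K. B k))"
    using assms by (subst prob_compl) auto
  also have "\<dots> \<le> prob T"
    using assms by (intro finite_measure_mono) auto
  finally show ?thesis .
qed

lemma prob_max_col_norm_layer_le:
  fixes p :: nat
  assumes N: "\<And>k. k \<le> L \<Longrightarrow> 0 < N k" and "0 < p" "1 \<le> i" "i \<le> L"
  shows "1 - (\<Sum>k=1..i. sqrt 2 * real (N k) / real (N (k - 1)) ^ p)
       \<le> measure (weight_space L N)
           {w \<in> space (weight_space L N).
              Max ((\<lambda>j. col_norm m (layer N X w i) j) ` {..<N i})
              \<le> (4 * real p) powr (real i / 2) * sqrt (\<Prod>k\<in>{1..<i}. real (N k))
                  * sqrt (\<Prod>k\<in>{0..<i}. ln (real (N k))) * frob_norm m (N 0) X}"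
    (is "_ \<le> measure _ {w \<in> _. ?max w \<le> ?bound}")
proof -
  interpret prob_space "weight_space L N"
    unfolding weight_space_def by (rule prob_space_PiM_std_gaussian)
  define B where "B k = large_column_event m N X (4 * real p * ln (real (N (k - 1)))) k \<inter> space (weight_space L N)"
    for k
  have B: "B k \<in> events \<and> prob (B k) \<le> sqrt 2 * real (N k) / real (N (k - 1)) ^ p" if k: "k \<in> {1..i}" for k
  proof -
    obtain j where j: "k = Suc j" using k by (cases k) auto
    have "weight_index k N \<subseteq> weight_index L N"
      using k \<open>i \<le> L\<close> by (intro weight_index_mono) auto
    then show ?thesis
      unfolding B_def j weight_space_def
      using sets_large_column_event measure_large_column_event[unfolded weight_space_def] k j N \<open>i \<le> L\<close>
      by auto
  qed
  have T: "{w \<in> space (weight_space L N). ?max w \<le> ?bound} \<in> events"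
  proof -
    have "(\<lambda>w. layer N X w i r c) \<in> borel_measurable (weight_space L N)" if "c < N i" for r c
      unfolding weight_space_def using \<open>i \<le> L\<close> that by (intro measurable_layer weight_index_mono)
    then have "?max \<in> borel_measurable (weight_space L N)"
      unfolding col_norm_def by (intro borel_measurable_Max) auto
    then show ?thesis by measurable
  qed
  have cover: "space (weight_space L N) - (\<Union>k\<in>{1..i}. B k) \<subseteq> {w \<in> space (weight_space L N). ?max w \<le> ?bound}"
  proof safe
    fix w assume "w \<in> space (weight_space L N)" "w \<notin> (\<Union>k\<in>{1..i}. B k)"
    then have "w \<notin> large_column_event m N X (4 * real p * ln (real (N j))) (Suc j)" if "j < i" for j
      using that by (force simp: B_def)
    then show "?max w \<le> ?bound"
      using N \<open>0 < p\<close> \<open>1 \<le> i\<close> \<open>i \<le> L\<close> by (intro max_col_norm_layer_le_outside_large_columns) auto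
  qed
  show ?thesis
    using B by (intro prob_ge_one_minus_union_bound[OF _ _ _ T cover]) auto
qed

theorem mainTheorem6:
  fixes m L :: nat and N :: "nat \<Rightarrow> nat" and X :: "nat \<Rightarrow> nat \<Rightarrow> real"
  assumes "\<And>k. k \<le> L \<Longrightarrow> N k \<ge> 3"
  shows "(\<forall>(p::nat) i. 2 \<le> p \<longrightarrow> 1 \<le> i \<longrightarrow> i \<le> L \<longrightarrow>
            measure (weight_space L N)
              {w \<in> space (weight_space L N).
                 Max ((\<lambda>j. col_norm m (layer N X w i) j) ` {..<N i})
                 \<le> (4 * real p) powr (real i / 2)
                   * sqrt (\<Prod>k\<in>{1..<i}. real (N k))
                   * sqrt (\<Prod>k\<in>{0..<i}. ln (real (N k)))
                   * frob_norm m (N 0) X}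
            \<ge> 1 - (\<Sum>k=1..i. 2 * real (N k) / real (N (k - 1)) ^ p))
       \<and> (\<forall>i. 1 \<le> i \<longrightarrow> i \<le> L \<longrightarrow>
            (\<integral>w. (frob_norm m (N i) (layer N X w i))\<^sup>2 \<partial>weight_space L N)
            \<ge> (frob_norm m (N 0) X)\<^sup>2 / (2 * pi) ^ i * (\<Prod>k=1..i. real (N k)))"
proof -
  have N: "0 < N k" if "k \<le> L" for k using assms[OF that] by simp
  have weaken: "1 - (\<Sum>k=1..i. 2 * real (N k) / real (N (k - 1)) ^ p)
      \<le> 1 - (\<Sum>k=1..i. sqrt 2 * real (N k) / real (N (k - 1)) ^ p)" for p :: nat and i
    by (intro diff_left_mono sum_mono divide_right_mono mult_right_mono) (auto simp: real_sqrt_le_iff')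
  have expectation: "(frob_norm m (N 0) X)\<^sup>2 / (2 * pi) ^ i * (\<Prod>k=1..i. real (N k))
      \<le> (\<integral>w. (frob_norm m (N i) (layer N X w i))\<^sup>2 \<partial>weight_space L N)" if "i \<le> L" for i
  proof -
    have "(2::real) ^ i \<le> (2 * pi) ^ i" by (rule power_mono) (use pi_gt3 in auto)
    then have "(frob_norm m (N 0) X)\<^sup>2 * (\<Prod>k=1..i. real (N k)) / (2 * pi) ^ i
        \<le> (frob_norm m (N 0) X)\<^sup>2 * (\<Prod>k=1..i. real (N k)) / 2 ^ i"
      by (intro divide_left_mono) (auto intro!: mult_nonneg_nonneg prod_nonneg)
    then show ?thesis using integral_frob_norm_sq_layer[OF that] by simp
  qed
  show ?thesis
    using N by (intro conjI allI impI expectation order.trans[OF weaken prob_max_col_norm_layer_le]) auto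
qed

end
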